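(* Let $(X,* )$ be a semi-group satisfying $a*b*b*c=a*b*c$ for all $a,b,c\in X$. Let $C^{nc}_n=\mathbb{Z}X^{n+1}$ for $n\ge0$ (and $0$ otherwise), and define $d_i:C^{nc}_n\to C^{nc}_{n-1}$, $0\le i\le n$, on basis elements by $$d_i(x_0,\dots,x_n)=\begin{cases}(x_0*x_1,x_2,\dots,x_n) & i=0,\\ (x_0,\dots,x_{n-2},x_{n-1}*x_n) & i=n,\\ (x_0,\dots,x_{i-2},x_{i-1}*x_i,x_i*x_{i+1},x_{i+2},\dots,x_n) & 0<i<n.\end{cases}$$ Let $\partial^{nc}_n=\sum_{i=0}^n(-1)^i d_i$. Then $(C^{nc}_n,\partial^{nc}_n)$ is a chain complex. *)

theory Defs
  imports Main "HOL-Library.Poly_Mapping"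
begin

definition face :: "('a \<Rightarrow> 'a \<Rightarrow> 'a) \<Rightarrow> nat \<Rightarrow> nat \<Rightarrow> 'a list \<Rightarrow> 'a list" where
  "face m n i xs =
    (if i = 0 then m (xs ! 0) (xs ! 1) # drop 2 xs
     else if i = n then take (n - 1) xs @ [m (xs ! (n - 1)) (xs ! n)]
     else take (i - 1) xs @ [m (xs ! (i - 1)) (xs ! i), m (xs ! i) (xs ! (i + 1))] @ drop (i + 2) xs)"

text \<open>Chains: the free abelian group on tuples, i.e. finitely supported maps 'a list to int.
  C_n consists of those chains supported on tuples of length n+1.\<close>
definition chains :: "nat \<Rightarrow> ('a list \<Rightarrow>\<^sub>0 int) set" where
  "chains n = {c. Poly_Mapping.keys c \<subseteq> {xs. length xs = Suc n}}"

text \<open>Boundary map on C_n: the linear extension of sum (-1)^i d_i; zero for n = 0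
  (as C_{-1} = 0).\<close>
definition bdry :: "('a \<Rightarrow> 'a \<Rightarrow> 'a) \<Rightarrow> nat \<Rightarrow> ('a list \<Rightarrow>\<^sub>0 int) \<Rightarrow> ('a list \<Rightarrow>\<^sub>0 int)" where
  "bdry m n c =
    (if n = 0 then 0
     else frag_extend (\<lambda>xs. \<Sum>i\<le>n. frag_cmul ((-1) ^ i) (frag_of (face m n i xs))) c)"

end

theory Submission imports Defs begin

text \<open>The faces satisfy the presimplicial identities \<open>d\<^sub>i \<circ> d\<^sub>j = d\<^sub>j\<^sub>-\<^sub>1 \<circ> d\<^sub>i\<close> for \<open>i < j\<close>.
  Comparing the two sides entry by entry, associativity settles all entries except those where
  the products overlap, and there the required equation is \<open>a * b * b * c = a * b * c\<close>.
  Given these identities, the terms of \<open>\<partial> \<circ> \<partial>\<close> cancel in pairs exactly as for any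
  presimplicial abelian group: the term \<open>(i, j)\<close> with \<open>i < j\<close> cancels against \<open>(j - 1, i)\<close>.\<close>

definition face_sum :: "('a \<Rightarrow> 'a \<Rightarrow> 'a) \<Rightarrow> nat \<Rightarrow> 'a list \<Rightarrow> ('a list \<Rightarrow>\<^sub>0 int)" where
  "face_sum m n xs = (\<Sum>i\<le>n. frag_cmul ((-1) ^ i) (frag_of (face m n i xs)))"

lemma bdry_eq_frag_extend: "n \<noteq> 0 \<Longrightarrow> bdry m n c = frag_extend (face_sum m n) c"
  unfolding bdry_def face_sum_def by simp

lemma length_face:
  assumes "1 \<le> n" "length xs = Suc n" "i \<le> n"
  shows "length (face m n i xs) = n"
  using assms unfolding face_def by auto

lemma nth_face:
  assumes "1 \<le> n" "length xs = Suc n" "i \<le> n" "k < n"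
  shows "face m n i xs ! k =
    (if Suc k < i then xs ! k
     else if Suc k = i \<or> k = i then m (xs ! k) (xs ! Suc k)
     else xs ! Suc k)"
  using assms unfolding face_def
  by (auto simp: nth_append min_def nth_Cons' Suc_diff_Suc numeral_2_eq_2 add.commute)

lemma face_face:
  assumes assoc: "\<And>a b c. m (m a b) c = m a (m b c)"
    and idem: "\<And>a b c. m (m (m a b) b) c = m (m a b) c"
    and "1 \<le> n" "length xs = Suc (Suc n)" "i < j" "j \<le> Suc n"
  shows "face m n i (face m (Suc n) j xs) = face m n (j - 1) (face m (Suc n) i xs)"
proof (rule nth_equalityI)
  show "length (face m n i (face m (Suc n) j xs)) = length (face m n (j - 1) (face m (Suc n) i xs))"
    using assms by (simp add: length_face)
next
  have idem_right: "m a (m b (m b c)) = m a (m b c)" for a b c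
    using idem assoc by metis
  fix k assume "k < length (face m n i (face m (Suc n) j xs))"
  then have "k < n"
    using assms by (simp add: length_face)
  then show "face m n i (face m (Suc n) j xs) ! k = face m n (j - 1) (face m (Suc n) i xs) ! k"
    using assms by (auto simp: nth_face length_face assoc idem_right)
qed

lemma frag_extend_frag_extend:
  "frag_extend f (frag_extend g c) = frag_extend (\<lambda>x. frag_extend f (g x)) c"
  using subset_UNIV
  by (induction c rule: frag_induction) (auto simp: frag_extend_diff)

lemma alternating_double_sum_eq_0:
  fixes g :: "nat \<Rightarrow> nat \<Rightarrow> 'x \<Rightarrow>\<^sub>0 int"
  assumes presimplicial: "\<And>i j. i < j \<Longrightarrow> j \<le> Suc n \<Longrightarrow> g i j = g (j - 1) i"
  shows "(\<Sum>j\<le>Suc n. frag_cmul ((-1) ^ j) (\<Sum>i\<le>n. frag_cmul ((-1) ^ i) (g i j))) = 0"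
proof -
  define h where "h = (\<lambda>(i, j). frag_cmul ((-1) ^ (i + j)) (g i j))"
  let ?A = "{(i, j). i < j \<and> j \<le> Suc n}"
  let ?B = "{(i, j). j \<le> i \<and> i \<le> n}"
  have finite_B: "finite ?B"
    by (rule finite_subset[of _ "{..n} \<times> {..n}"]) auto
  have "(\<Sum>j\<le>Suc n. frag_cmul ((-1) ^ j) (\<Sum>i\<le>n. frag_cmul ((-1) ^ i) (g i j)))
      = (\<Sum>i\<le>n. \<Sum>j\<le>Suc n. h (i, j))"
    by (subst sum.swap) (simp add: h_def frag_cmul_sum power_add mult.commute)
  also have "\<dots> = sum h ({..n} \<times> {..Suc n})"
    by (simp only: sum.cartesian_product case_prod_eta)
  also have "{..n} \<times> {..Suc n} = ?A \<union> ?B"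
    by auto
  also have "sum h (?A \<union> ?B) = sum h ?A + sum h ?B"
    by (rule sum.union_disjoint) (auto intro: finite_subset[of _ "{..n} \<times> {..Suc n}"] finite_B)
  also have "sum h ?A = sum (\<lambda>x. h ((\<lambda>(i, j). (j, Suc i)) x)) ?B"
    by (rule sum.reindex_bij_betw[symmetric],
        rule bij_betw_byWitness[where f' = "\<lambda>(i, j). (j - 1, i)"]) auto
  also have "\<dots> = sum (\<lambda>x. - h x) ?B"
    by (rule sum.cong) (auto simp: h_def presimplicial add.commute)
  finally show ?thesis
    by (simp add: sum_negf)
qed

lemma keys_face_sum:
  assumes "1 \<le> n" "length xs = Suc n"
  shows "Poly_Mapping.keys (face_sum m n xs) \<subseteq> {ys. length ys = n}"
proof -
  have "Poly_Mapping.keys (frag_cmul ((-1) ^ i) (frag_of (face m n i xs))) \<subseteq> {ys. length ys = n}"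
    if "i \<le> n" for i
    using keys_cmul[of "(-1) ^ i" "frag_of (face m n i xs)"] length_face[OF assms that]
    by auto
  then show ?thesis
    unfolding face_sum_def by (intro order_trans[OF keys_sum] UN_least) auto
qed

lemma bdry_in_chains:
  assumes "c \<in> chains (Suc n)"
  shows "bdry m (Suc n) c \<in> chains n"
proof -
  have "Poly_Mapping.keys (face_sum m (Suc n) xs) \<subseteq> {ys. length ys = Suc n}"
    if "xs \<in> Poly_Mapping.keys c" for xs
    using that assms by (intro keys_face_sum) (auto simp: chains_def)
  then have "Poly_Mapping.keys (frag_extend (face_sum m (Suc n)) c) \<subseteq> {ys. length ys = Suc n}"
    by (intro order_trans[OF keys_frag_extend] UN_least)
  then show ?thesis
    by (simp add: chains_def bdry_eq_frag_extend)
qed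

lemma face_sum_face_sum:
  assumes assoc: "\<And>a b c. m (m a b) c = m a (m b c)"
    and idem: "\<And>a b c. m (m (m a b) b) c = m (m a b) c"
    and "1 \<le> n" "length xs = Suc (Suc n)"
  shows "frag_extend (face_sum m n) (face_sum m (Suc n) xs) = 0"
proof -
  have "frag_extend (face_sum m n) (face_sum m (Suc n) xs)
      = (\<Sum>j\<le>Suc n. frag_cmul ((-1) ^ j)
           (\<Sum>i\<le>n. frag_cmul ((-1) ^ i) (frag_of (face m n i (face m (Suc n) j xs)))))"
    unfolding face_sum_def
    by (simp only: frag_extend_sum[OF finite_atMost] comp_def frag_extend_cmul frag_extend_of)
  also have "\<dots> = 0"
    by (rule alternating_double_sum_eq_0) (use face_face[OF assoc idem assms(3,4)] in simp)
  finally show ?thesis .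
qed

theorem theorem1p6:
  fixes m :: "'a \<Rightarrow> 'a \<Rightarrow> 'a"
  assumes assoc: "\<And>a b c. m (m a b) c = m a (m b c)"
    and idem: "\<And>a b c. m (m (m a b) b) c = m (m a b) c"
  shows "(\<forall>n. \<forall>c \<in> chains (Suc n). bdry m (Suc n) c \<in> chains n)
       \<and> (\<forall>n. \<forall>c \<in> chains (Suc n). bdry m n (bdry m (Suc n) c) = 0)"
proof (intro conjI allI ballI)
  fix n and c :: "'a list \<Rightarrow>\<^sub>0 int"
  assume c: "c \<in> chains (Suc n)"
  then show "bdry m (Suc n) c \<in> chains n"
    by (rule bdry_in_chains)
  show "bdry m n (bdry m (Suc n) c) = 0"
  proof (cases "n = 0")
    case True
    then show ?thesis by (simp add: bdry_def)
  next
    case False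
    have "frag_extend (face_sum m n) (face_sum m (Suc n) xs) = 0"
      if "xs \<in> Poly_Mapping.keys c" for xs
      using that c False by (intro face_sum_face_sum[OF assoc idem]) (auto simp: chains_def)
    then show ?thesis
      by (simp add: bdry_eq_frag_extend False frag_extend_frag_extend frag_extend_eq_0)
  qed
qed

end
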